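(* Let $q$ be a prime power and $1\le d\le e$ integers, and assume $q\ge 3$, or $q=2$ and $d\neq e$. Then for all $0\le i\le d$ and $0\le j\le d$, with $h_{\max}=\min\{j,d-i\}$, $$|T_{h_{\max}}(i,j)|-|T_{h_{\max}-1}(i,j)|\le |B_j(i)|\le |T_{h_{\max}}(i,j)|,$$ and the sign of $B_j(i)$ is $(-1)^{\max(0,\,j+i-d)}$.
   Context: For integers $m\ge 0$ and $l$, ${m\brack l}=\prod_{t=1}^{l}\frac{q^{m-t+1}-1}{q^t-1}$ for $l\ge0$ and $0$ for $l<0$. For $0\le i,j\le d$, $$B_j(i)=\sum_{h=0}^{\min\{j,d-i\}}(-1)^{j-h}q^{eh+\binom{j-h}{2}}{d-h\brack d-j}{d-i\brack h};$$ these are the eigenvalues of the bilinear forms graph $H_q(d,e,j)$ (vertices: $d\times e$ matrices over $\mathbb F_q$, adjacent iff their difference has rank $j$). $T_h(i,j)$ denotes the $h$-th summand for $0\le h\le\min\{j,d-i\}$, and $T_{-1}(i,j)=0$. *)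

theory Defs
  imports Complex_Main "HOL-Computational_Algebra.Primes"
begin

text \<open>Gaussian binomial coefficient [m, l]_q for l >= 0 (the case l < 0 never arises below).\<close>
definition gbinom :: "nat \<Rightarrow> nat \<Rightarrow> nat \<Rightarrow> real" where
  "gbinom q m l = (\<Prod>t=1..l. (real q ^ (m - t + 1) - 1) / (real q ^ t - 1))"

definition Tsum :: "nat \<Rightarrow> nat \<Rightarrow> nat \<Rightarrow> nat \<Rightarrow> nat \<Rightarrow> int \<Rightarrow> real" where
  "Tsum q d e i j h = (if h < 0 then 0 else
     (-1) ^ (j - nat h) * real q ^ (e * nat h + ((j - nat h) choose 2))
       * gbinom q (d - nat h) (d - j) * gbinom q (d - i) (nat h))"

definition Beig :: "nat \<Rightarrow> nat \<Rightarrow> nat \<Rightarrow> nat \<Rightarrow> nat \<Rightarrow> real" where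
  "Beig q d e i j = (\<Sum>h=0..min j (d - i). Tsum q d e i j (int h))"

end

theory Submission
  imports Defs
begin

text \<open>Up to the sign (-1)^(j-h), the summands T_h(i,j) are positive and strictly increasing in
  h on 0..min j (d-i). An alternating sum of positive, strictly increasing terms has the sign of
  its last term and absolute value between the difference of its last two terms and its last
  term. Monotonicity reduces to the ratio bound T_(k+1)/T_k > 1, which after cancelling Gaussian
  binomials needs q^(d+1) <= (q-1)^2 q^(e+v) with v = d-i-k-1; this fails only when q = 2 and
  v = 0, d = e.\<close>

lemma gbinom_pos:
  assumes "q \<ge> 2" "l \<le> m"
  shows "gbinom q m l > 0"
  unfolding gbinom_def
proof (rule prod_pos)
  fix t assume t: "t \<in> {1..l}"
  have "real q ^ (m - t + 1) > 1" "real q ^ t > 1"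
    using assms t by (intro one_less_power; simp)+
  then show "(real q ^ (m - t + 1) - 1) / (real q ^ t - 1) > 0" by simp
qed

lemma gbinom_Suc:
  assumes "l < m"
  shows "gbinom q m (Suc l) = gbinom q m l * ((real q ^ (m - l) - 1) / (real q ^ Suc l - 1))"
proof -
  have "m - Suc l + 1 = m - l" using assms by simp
  then show ?thesis unfolding gbinom_def prod.cl_ivl_Suc by simp
qed

lemma gbinom_Suc_top:
  assumes "q \<ge> 2" "l \<le> m"
  shows "gbinom q (Suc m) l * (real q ^ (Suc m - l) - 1) = gbinom q m l * (real q ^ Suc m - 1)"
  using assms(2)
proof (induction l)
  case 0
  then show ?case by (simp add: gbinom_def)
next
  case (Suc l)
  then have l: "l < m" by simp
  have "real q ^ Suc l > 1" using assms(1) by (intro one_less_power) auto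
  have "gbinom q (Suc m) (Suc l) * (real q ^ (Suc m - Suc l) - 1)
      = (gbinom q (Suc m) l * (real q ^ (Suc m - l) - 1)) * (real q ^ (m - l) - 1) / (real q ^ Suc l - 1)"
    using l by (simp add: gbinom_Suc)
  also have "\<dots> = gbinom q m l * (real q ^ Suc m - 1) * (real q ^ (m - l) - 1) / (real q ^ Suc l - 1)"
    using Suc l by simp
  also have "\<dots> = gbinom q m (Suc l) * (real q ^ Suc m - 1)"
    using l by (simp add: gbinom_Suc)
  finally show ?case .
qed

definition alt_sum :: "(nat \<Rightarrow> 'a::linordered_idom) \<Rightarrow> nat \<Rightarrow> 'a" where
  "alt_sum c H = (\<Sum>h=0..H. (-1) ^ (H - h) * c h)"

lemma alt_sum_0 [simp]: "alt_sum c 0 = c 0"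
  by (simp add: alt_sum_def)

lemma alt_sum_Suc: "alt_sum c (Suc H) = c (Suc H) - alt_sum c H"
proof -
  have "(\<Sum>h=0..H. (-1) ^ (Suc H - h) * c h) = - (\<Sum>h=0..H. (-1) ^ (H - h) * c h)"
    by (subst sum_negf[symmetric], rule sum.cong) (auto simp: Suc_diff_le)
  then show ?thesis unfolding alt_sum_def by simp
qed

lemma alt_sum_pos_le_last:
  assumes "0 < c 0" "\<forall>h<H. c h < c (Suc h)"
  shows "0 < alt_sum c H \<and> alt_sum c H \<le> c H"
  using assms(2)
proof (induction H)
  case 0
  then show ?case using assms(1) by simp
next
  case (Suc H)
  then show ?case by (fastforce simp: alt_sum_Suc)
qed

lemma alt_sum_Suc_ge:
  assumes "0 < c 0" "\<forall>h\<le>H. c h < c (Suc h)"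
  shows "c (Suc H) - c H \<le> alt_sum c (Suc H)"
  using alt_sum_pos_le_last[of c H] assms by (simp add: alt_sum_Suc)

definition Tabs :: "nat \<Rightarrow> nat \<Rightarrow> nat \<Rightarrow> nat \<Rightarrow> nat \<Rightarrow> nat \<Rightarrow> real" where
  "Tabs q d e i j h = real q ^ (e * h + ((j - h) choose 2)) * gbinom q (d - h) (d - j) * gbinom q (d - i) h"

lemma Tsum_eq_sign_Tabs: "Tsum q d e i j (int h) = (-1) ^ (j - h) * Tabs q d e i j h"
  unfolding Tsum_def Tabs_def by simp

lemma Tabs_pos:
  assumes "q \<ge> 2" "h \<le> j" "h \<le> d - i"
  shows "Tabs q d e i j h > 0"
  unfolding Tabs_def using assms by (auto intro!: mult_pos_pos gbinom_pos)

lemma Beig_eq_sign_alt_sum: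
  "Beig q d e i j = (-1) ^ (j - min j (d - i)) * alt_sum (Tabs q d e i j) (min j (d - i))"
proof -
  let ?H = "min j (d - i)"
  have "Beig q d e i j = (\<Sum>h=0..?H. (-1) ^ (j - ?H) * ((-1) ^ (?H - h) * Tabs q d e i j h))"
    unfolding Beig_def Tsum_eq_sign_Tabs
  proof (rule sum.cong)
    fix h assume "h \<in> {0..?H}"
    then have "j - h = (j - ?H) + (?H - h)" by auto
    then show "(-1) ^ (j - h) * Tabs q d e i j h = (-1) ^ (j - ?H) * ((-1) ^ (?H - h) * Tabs q d e i j h)"
      by (simp only: power_add mult.assoc)
  qed simp
  then show ?thesis unfolding alt_sum_def by (simp add: sum_distrib_left)
qed

lemma power_Suc_le_pred_squared_mult_power:
  fixes x :: real
  assumes "x \<ge> 2" and "d + 1 \<le> n \<or> (x \<ge> 3 \<and> d = n)"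
  shows "x ^ (d + 1) \<le> (x - 1)^2 * x ^ n"
  using assms(2)
proof
  assume "d + 1 \<le> n"
  then have "x ^ (d + 1) \<le> x ^ n" using assms(1) by (intro power_increasing) auto
  also have "\<dots> \<le> (x - 1)^2 * x ^ n"
  proof -
    have "(x - 1)^2 \<ge> 1" using assms(1) mult_mono[of 1 "x - 1" 1 "x - 1"]
      by (simp add: power2_eq_square)
    then show ?thesis using assms(1) mult_right_mono[of 1 "(x - 1)^2" "x ^ n"] by simp
  qed
  finally show ?thesis .
next
  assume x3: "x \<ge> 3 \<and> d = n"
  then have "x \<le> (x - 1)^2" using mult_right_mono[of 2 "x - 1" "x - 1"]
    by (simp add: power2_eq_square)
  then have "x * x ^ d \<le> (x - 1)^2 * x ^ d" using x3 by (simp add: mult_right_mono)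
  then show ?thesis using x3 by simp
qed

text \<open>The ratio bound T_(k+1)/T_k > 1 with the Gaussian binomials already cancelled; here
  n = d - k, u = j - k - 1 and v = d - i - k - 1.\<close>
lemma consecutive_ratio_inequality:
  fixes x :: real
  assumes x: "x \<ge> 2" and "n + k = d" and c: "x ^ (d + 1) \<le> (x - 1)^2 * x ^ (e + v)"
  shows "x ^ u * (x ^ n - 1) * (x ^ (k + 1) - 1) < x ^ e * (x ^ (v + 1) - 1) * (x ^ (u + 1) - 1)"
proof -
  have pu: "x ^ u \<ge> 1" and pv: "x ^ v \<ge> 1" and pn: "x ^ n \<ge> 1" and pe: "x ^ e \<ge> 1"
    using x by (auto intro: one_le_power)
  have pk: "x ^ (k + 1) > 1" using x by (intro one_less_power) auto
  have "(x ^ n - 1) * (x ^ (k + 1) - 1) < x ^ n * x ^ (k + 1)"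
    using pn pk by (simp add: algebra_simps)
  also have "\<dots> = x ^ (d + 1)" using assms(2) by (simp add: power_add[symmetric])
  finally have "(x ^ n - 1) * (x ^ (k + 1) - 1) < x ^ (d + 1)" .
  then have "x ^ u * (x ^ n - 1) * (x ^ (k + 1) - 1) < x ^ u * x ^ (d + 1)"
    using pu by (subst mult.assoc) (rule mult_strict_left_mono, simp_all)
  also have "\<dots> \<le> x ^ u * ((x - 1)^2 * x ^ (e + v))" using c pu by simp
  also have "\<dots> = x ^ e * (x ^ v * (x - 1)) * (x ^ u * (x - 1))"
    by (simp add: power_add power2_eq_square algebra_simps)
  also have "\<dots> \<le> x ^ e * (x ^ (v + 1) - 1) * (x ^ (u + 1) - 1)"
  proof -
    have "x ^ v * (x - 1) \<le> x ^ (v + 1) - 1" and "x ^ u * (x - 1) \<le> x ^ (u + 1) - 1"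
      using pu pv by (simp_all add: algebra_simps)
    moreover have "0 \<le> x ^ v * (x - 1)" "0 \<le> x ^ u * (x - 1)" using x pu pv by auto
    ultimately show ?thesis using pe by (intro mult_mono) auto
  qed
  finally show ?thesis .
qed

lemma Tabs_less_Tabs_Suc:
  assumes q: "q \<ge> 3 \<or> (q = 2 \<and> d \<noteq> e)" and "d \<le> e" "j \<le> d" "k < j" "k < d - i"
  shows "Tabs q d e i j k < Tabs q d e i j (Suc k)"
proof -
  have q2: "q \<ge> 2" using q by auto
  define x where "x = real q"
  have x2: "x \<ge> 2" using q2 by (simp add: x_def)
  define u where "u = j - Suc k"
  define v where "v = d - i - Suc k"
  define G1 where "G1 = gbinom q (d - Suc k) (d - j)"
  define G2 where "G2 = gbinom q (d - i) k"
  define P where "P = x ^ (e * k + (u choose 2)) * G1 * G2"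
  have "G1 > 0" "G2 > 0" unfolding G1_def G2_def using assms q2 by (auto intro!: gbinom_pos)
  then have P: "P > 0" unfolding P_def using x2 by simp
  have "x ^ Suc k > 1" "x ^ Suc u > 1" using x2 by (intro one_less_power; simp)+
  then have xk: "x ^ Suc k - 1 > 0" and xu: "x ^ Suc u - 1 > 0" by simp_all
  have "gbinom q (Suc (d - Suc k)) (d - j) * (real q ^ (Suc (d - Suc k) - (d - j)) - 1)
      = G1 * (real q ^ Suc (d - Suc k) - 1)"
    unfolding G1_def using assms q2 by (intro gbinom_Suc_top) auto
  moreover have "Suc (d - Suc k) = d - k" "d - k - (d - j) = Suc u" using assms by (auto simp: u_def)
  ultimately have top: "gbinom q (d - k) (d - j) = G1 * (x ^ (d - k) - 1) / (x ^ Suc u - 1)"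
    using xu unfolding x_def by (simp add: field_simps)
  have bot: "gbinom q (d - i) (Suc k) = G2 * ((x ^ Suc v - 1) / (x ^ Suc k - 1))"
  proof -
    have "d - i - k = Suc v" using assms by (simp add: v_def)
    then show ?thesis unfolding G2_def x_def using assms by (simp add: gbinom_Suc)
  qed
  have "j - k = Suc u" "(Suc u choose 2) = (u choose 2) + u"
    using assms by (auto simp: u_def numeral_2_eq_2)
  then have Tk: "Tabs q d e i j k = P * (x ^ u * (x ^ (d - k) - 1) / (x ^ Suc u - 1))"
    unfolding Tabs_def P_def top x_def[symmetric] G2_def[symmetric] using xu
    by (simp add: power_add field_simps)
  have TSk: "Tabs q d e i j (Suc k) = P * (x ^ e * (x ^ Suc v - 1) / (x ^ Suc k - 1))"
    unfolding Tabs_def P_def bot G1_def[symmetric] x_def[symmetric] u_def using xk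
    by (simp add: power_add field_simps)
  have "d + 1 \<le> e + v \<or> (x \<ge> 3 \<and> d = e + v)"
    using assms by (auto simp: x_def)
  then have "x ^ (d + 1) \<le> (x - 1)^2 * x ^ (e + v)"
    by (rule power_Suc_le_pred_squared_mult_power[OF x2])
  then have "x ^ u * (x ^ (d - k) - 1) * (x ^ (k + 1) - 1) < x ^ e * (x ^ (v + 1) - 1) * (x ^ (u + 1) - 1)"
    using consecutive_ratio_inequality[OF x2, of "d - k" k] assms by simp
  then have "x ^ u * (x ^ (d - k) - 1) / (x ^ Suc u - 1) < x ^ e * (x ^ Suc v - 1) / (x ^ Suc k - 1)"
    using xk xu by (simp add: divide_simps mult_ac)
  then show ?thesis unfolding Tk TSk using P by (rule mult_strict_left_mono)
qed

theorem lemma4p1: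
  fixes q d e i j :: nat
  assumes "\<exists>p k. prime p \<and> k \<ge> 1 \<and> q = p ^ k"
    and "1 \<le> d" and "d \<le> e"
    and "q \<ge> 3 \<or> (q = 2 \<and> d \<noteq> e)"
    and "i \<le> d" and "j \<le> d"
  shows "\<bar>Tsum q d e i j (int (min j (d - i)))\<bar> - \<bar>Tsum q d e i j (int (min j (d - i)) - 1)\<bar>
           \<le> \<bar>Beig q d e i j\<bar>
       \<and> \<bar>Beig q d e i j\<bar> \<le> \<bar>Tsum q d e i j (int (min j (d - i)))\<bar>
       \<and> sgn (Beig q d e i j) = (-1) ^ (nat (max 0 (int j + int i - int d)))"
proof -
  define H where "H = min j (d - i)"
  define c where "c = Tabs q d e i j"
  have pos: "h \<le> H \<Longrightarrow> c h > 0" for h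
    using assms(4) unfolding c_def H_def by (intro Tabs_pos) auto
  have inc: "\<forall>h<H. c h < c (Suc h)"
    using assms(3,4,6) unfolding c_def H_def by (auto intro: Tabs_less_Tabs_Suc)
  have abs_T: "h \<le> H \<Longrightarrow> \<bar>Tsum q d e i j (int h)\<bar> = c h" for h
    using pos[of h] by (simp add: Tsum_eq_sign_Tabs c_def abs_mult)
  have B: "Beig q d e i j = (-1) ^ (j - H) * alt_sum c H"
    unfolding H_def c_def by (rule Beig_eq_sign_alt_sum)
  have S: "0 < alt_sum c H \<and> alt_sum c H \<le> c H"
    using alt_sum_pos_le_last[OF pos inc] by simp
  have low: "c H - \<bar>Tsum q d e i j (int H - 1)\<bar> \<le> alt_sum c H"
  proof (cases H)
    case 0
    then show ?thesis by (simp add: Tsum_def)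
  next
    case (Suc m)
    then have "int H - 1 = int m" by simp
    then show ?thesis using Suc abs_T[of m] alt_sum_Suc_ge[of c m] pos inc by simp
  qed
  have "nat (max 0 (int j + int i - int d)) = j - H" unfolding H_def using assms(5) by auto
  then show ?thesis using B S low abs_T[of H] unfolding H_def[symmetric]
    by (simp add: abs_mult sgn_mult)
qed

end
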